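(* Consider the Lorenz-Hamilton system on $\mathbb{R}^3$ $$\dot x_1=\tfrac12x_2,\qquad \dot x_2=-x_1x_3,\qquad \dot x_3=x_1x_2 ,$$ with equilibria $e_0=(0,0,0)$, $e_1^m=(m,0,0)$, $e_3^m=(0,0,m)$ for $m\in\mathbb{R}\setminus\{0\}$. Then: (i) $e_0$ and $e_1^m$ ($m\neq0$) are nonlinear stable; (ii) $e_3^m$ is nonlinear stable for $m>0$ and unstable for $m<0$.
   Context: Nonlinear stable means stable in the sense of Lyapunov: for every neighbourhood $U$ of the equilibrium there is a neighbourhood $V$ such that every trajectory starting in $V$ remains in $U$ for all $t\ge0$; unstable means not Lyapunov stable. *)

theory Defs
  imports "HOL-Analysis.Analysis"
begin

definition lorenz_hamilton :: "real^3 \<Rightarrow> real^3" where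
  "lorenz_hamilton x = vector [x$2 / 2, - (x$1 * x$3), x$1 * x$2]"

definition is_trajectory :: "(real^3 \<Rightarrow> real^3) \<Rightarrow> real \<Rightarrow> (real \<Rightarrow> real^3) \<Rightarrow> bool" where
  "is_trajectory f T x \<longleftrightarrow>
     (\<forall>t\<in>{0..T}. (x has_vector_derivative f (x t)) (at t within {0..T}))"

text \<open>Lyapunov (nonlinear) stability of e: for every neighbourhood U of e there is a
  neighbourhood V of e such that every trajectory starting in V stays in U for all
  t \<ge> 0 (for as long as it is defined, i.e. on every interval [0,T] on which it exists).\<close>
definition lyapunov_stable :: "(real^3 \<Rightarrow> real^3) \<Rightarrow> real^3 \<Rightarrow> bool" where
  "lyapunov_stable f e \<longleftrightarrow>
     (\<forall>U. open U \<and> e \<in> U \<longrightarrow>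
        (\<exists>V. open V \<and> e \<in> V \<and>
           (\<forall>T x. 0 \<le> T \<and> is_trajectory f T x \<and> x 0 \<in> V \<longrightarrow> (\<forall>t\<in>{0..T}. x t \<in> U))))"

end

theory Submission
  imports Defs "HOL-Real_Asymp.Real_Asymp"
begin

text \<open>The system has the two first integrals \<open>x\<^sub>2\<^sup>2 + x\<^sub>3\<^sup>2\<close> and \<open>x\<^sub>1\<^sup>2 - x\<^sub>3\<close>.
  An equilibrium that is an isolated point of its common level set is stable: a trajectory
  starting close enough stays on a level set close to that of the equilibrium, and it cannot
  cross a small sphere around it, where these integrals stay uniformly away from their values
  at the equilibrium. This covers \<open>e\<^sub>0\<close>, \<open>e\<^sub>1\<^sup>m\<close> and \<open>e\<^sub>3\<^sup>m\<close> for \<open>m > 0\<close>. For \<open>m < 0\<close> the level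
  set of \<open>e\<^sub>3\<^sup>m\<close> is a curve carrying an explicit homoclinic orbit, which starts arbitrarily
  close to \<open>e\<^sub>3\<^sup>m\<close> and reaches distance \<open>2|m|\<close> from it.\<close>

lemma trajectory_continuous_on:
  assumes "is_trajectory f T x"
  shows "continuous_on {0..T} x"
  using assms continuous_on_vector_derivative[of "{0..T}" x "\<lambda>t. f (x t)"]
  unfolding is_trajectory_def by blast

lemma lyapunov_stable_if_isolated_in_level_set:
  fixes \<Phi> :: "real^3 \<Rightarrow> 'a::metric_space"
  assumes "continuous_on UNIV \<Phi>"
    and conserved: "\<And>T x t. is_trajectory f T x \<Longrightarrow> t \<in> {0..T} \<Longrightarrow> \<Phi> (x t) = \<Phi> (x 0)"
    and "0 < r"
    and isolated: "\<And>y. y \<in> ball e r \<Longrightarrow> \<Phi> y = \<Phi> e \<Longrightarrow> y = e"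
  shows "lyapunov_stable f e"
  unfolding lyapunov_stable_def
proof (intro allI impI)
  fix U assume "open U \<and> e \<in> U"
  then obtain \<epsilon> where "0 < \<epsilon>" "ball e \<epsilon> \<subseteq> U"
    using open_contains_ball by blast
  define \<rho> where "\<rho> = min \<epsilon> (r/2)"
  have \<rho>: "0 < \<rho>" "\<rho> < r" "ball e \<rho> \<subseteq> U"
    using \<open>0 < \<epsilon>\<close> \<open>0 < r\<close> \<open>ball e \<epsilon> \<subseteq> U\<close> by (auto simp: \<rho>_def)
  define g where "g y = dist (\<Phi> y) (\<Phi> e)" for y
  have g_cont: "continuous_on UNIV g"
    unfolding g_def using assms(1) by (intro continuous_intros)
  obtain z where z: "z \<in> sphere e \<rho>" and z_min: "\<And>y. y \<in> sphere e \<rho> \<Longrightarrow> g z \<le> g y"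
    using continuous_attains_inf[OF compact_sphere _ continuous_on_subset[OF g_cont], of e \<rho>] \<rho>(1)
    by auto
  have "z \<noteq> e" "z \<in> ball e r"
    using z \<rho> by auto
  hence "0 < g z"
    using isolated unfolding g_def by auto
  define V where "V = ball e \<rho> \<inter> {y. g y < g z}"
  show "\<exists>V. open V \<and> e \<in> V \<and>
          (\<forall>T x. 0 \<le> T \<and> is_trajectory f T x \<and> x 0 \<in> V \<longrightarrow> (\<forall>t\<in>{0..T}. x t \<in> U))"
  proof (intro exI[of _ V] conjI allI impI ballI)
    show "open V"
      unfolding V_def using g_cont by (intro open_Int open_Collect_less continuous_intros) auto
    show "e \<in> V"
      using \<rho>(1) \<open>0 < g z\<close> by (simp add: V_def g_def)
    fix T x t assume "0 \<le> T \<and> is_trajectory f T x \<and> x 0 \<in> V" and t: "t \<in> {0..T}"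
    hence traj: "is_trajectory f T x" and x0: "dist e (x 0) < \<rho>" "g (x 0) < g z"
      by (auto simp: V_def)
    have "dist e (x t) < \<rho>"
    proof (rule ccontr)
      assume "\<not> dist e (x t) < \<rho>"
      moreover have "continuous_on {0..t} (\<lambda>s. dist e (x s))"
        using trajectory_continuous_on[OF traj] t
        by (intro continuous_intros) (auto elim: continuous_on_subset)
      ultimately obtain s where s: "0 \<le> s" "s \<le> t" "dist e (x s) = \<rho>"
        using IVT'[of "\<lambda>s. dist e (x s)" 0 \<rho> t] x0 t by auto
      hence "g z \<le> g (x s)"
        by (intro z_min) simp
      moreover have "g (x s) = g (x 0)"
        using conserved[OF traj, of s] s t by (simp add: g_def)
      ultimately show False
        using x0 by simp
    qed
    thus "x t \<in> U"
      using \<rho>(3) by auto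
  qed
qed

definition lorenz_hamilton_integrals :: "real^3 \<Rightarrow> real \<times> real" where
  "lorenz_hamilton_integrals x = ((x$2)\<^sup>2 + (x$3)\<^sup>2, (x$1)\<^sup>2 - x$3)"

lemma continuous_on_lorenz_hamilton_integrals: "continuous_on UNIV lorenz_hamilton_integrals"
  unfolding lorenz_hamilton_integrals_def by (intro continuous_intros)

lemma lorenz_hamilton_integrals_conserved:
  assumes traj: "is_trajectory lorenz_hamilton T x" and t: "t \<in> {0..T}"
  shows "lorenz_hamilton_integrals (x t) = lorenz_hamilton_integrals (x 0)"
proof -
  have comp: "((\<lambda>s. x s $ i) has_real_derivative lorenz_hamilton (x s) $ i) (at s within {0..T})"
    if "s \<in> {0..T}" for s i
    using bounded_linear.has_vector_derivative[OF bounded_linear_vec_nth] traj that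
    unfolding is_trajectory_def has_real_derivative_iff_has_vector_derivative by blast
  have "\<exists>c. \<forall>s\<in>{0..T}. (x s$2)\<^sup>2 + (x s$3)\<^sup>2 = c"
    by (rule has_field_derivative_zero_constant)
      (auto intro!: derivative_eq_intros comp simp: lorenz_hamilton_def algebra_simps)
  moreover have "\<exists>c. \<forall>s\<in>{0..T}. (x s$1)\<^sup>2 - x s$3 = c"
    by (rule has_field_derivative_zero_constant)
      (auto intro!: derivative_eq_intros comp simp: lorenz_hamilton_def algebra_simps)
  moreover have "0 \<in> {0..T}"
    using t by simp
  ultimately show ?thesis
    using t unfolding lorenz_hamilton_integrals_def by force
qed

lemma lyapunov_stable_lorenz_hamilton_if_isolated:
  assumes "0 < r"
    and "\<And>y. y \<in> ball e r \<Longrightarrow> lorenz_hamilton_integrals y = lorenz_hamilton_integrals e \<Longrightarrow> y = e"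
  shows "lyapunov_stable lorenz_hamilton e"
  using continuous_on_lorenz_hamilton_integrals lorenz_hamilton_integrals_conserved assms
  by (rule lyapunov_stable_if_isolated_in_level_set)

lemma lyapunov_stable_origin: "lyapunov_stable lorenz_hamilton (vector [0, 0, 0])"
proof (rule lyapunov_stable_lorenz_hamilton_if_isolated[of 1])
  fix y :: "real^3"
  assume "lorenz_hamilton_integrals y = lorenz_hamilton_integrals (vector [0, 0, 0])"
  hence "(y$2)\<^sup>2 + (y$3)\<^sup>2 = 0" "(y$1)\<^sup>2 = y$3"
    by (simp_all add: lorenz_hamilton_integrals_def)
  thus "y = vector [0, 0, 0]"
    by (simp add: vec_eq_iff forall_3)
qed simp

lemma lyapunov_stable_e1:
  assumes "m \<noteq> 0"
  shows "lyapunov_stable lorenz_hamilton (vector [m, 0, 0])"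
proof (rule lyapunov_stable_lorenz_hamilton_if_isolated[of "\<bar>m\<bar>"])
  fix y :: "real^3"
  assume y: "y \<in> ball (vector [m, 0, 0]) \<bar>m\<bar>"
    and "lorenz_hamilton_integrals y = lorenz_hamilton_integrals (vector [m, 0, 0])"
  hence "(y$2)\<^sup>2 + (y$3)\<^sup>2 = 0" "(y$1)\<^sup>2 - y$3 = m\<^sup>2"
    by (simp_all add: lorenz_hamilton_integrals_def)
  hence "y$2 = 0" "y$3 = 0" "y$1 = m \<or> y$1 = - m"
    by (simp_all add: power2_eq_iff)
  moreover have "\<bar>y$1 - m\<bar> < \<bar>m\<bar>"
    using component_le_norm_cart[of "y - vector [m, 0, 0]" 1] y
    by (simp add: dist_norm norm_minus_commute)
  ultimately show "y = vector [m, 0, 0]"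
    using assms by (auto simp: vec_eq_iff forall_3)
qed (use assms in simp)

lemma lyapunov_stable_e3_pos:
  assumes "0 < m"
  shows "lyapunov_stable lorenz_hamilton (vector [0, 0, m])"
proof (rule lyapunov_stable_lorenz_hamilton_if_isolated[of 1])
  fix y :: "real^3"
  assume "lorenz_hamilton_integrals y = lorenz_hamilton_integrals (vector [0, 0, m])"
  hence sum_sq: "(y$2)\<^sup>2 + (y$3)\<^sup>2 = m\<^sup>2" and y3: "y$3 = m + (y$1)\<^sup>2"
    by (simp_all add: lorenz_hamilton_integrals_def)
  have "m \<le> y$3"
    using y3 by simp
  moreover have "(y$3)\<^sup>2 \<le> m\<^sup>2"
    using sum_sq by (smt (verit) zero_le_power2)
  ultimately have "y$3 = m"
    using assms by (smt (verit) power_strict_mono zero_less_numeral)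
  thus "y = vector [0, 0, m]"
    using sum_sq y3 by (simp add: vec_eq_iff forall_3)
qed simp

lemma has_vector_derivative_vector3:
  assumes "(f1 has_real_derivative d1) (at t within S)" "(f2 has_real_derivative d2) (at t within S)"
    "(f3 has_real_derivative d3) (at t within S)"
  shows "((\<lambda>t. vector [f1 t, f2 t, f3 t] :: real^3) has_vector_derivative vector [d1, d2, d3])
           (at t within S)"
proof -
  have split: "vector [a, b, c] =
      a *\<^sub>R vector [1, 0, 0] + b *\<^sub>R vector [0, 1, 0] + c *\<^sub>R (vector [0, 0, 1] :: real^3)"
    for a b c :: real
    by (simp add: vec_eq_iff forall_3)
  have "((\<lambda>t. f1 t *\<^sub>R vector [1, 0, 0] + f2 t *\<^sub>R vector [0, 1, 0] +
               f3 t *\<^sub>R (vector [0, 0, 1] :: real^3)) has_vector_derivative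
          d1 *\<^sub>R vector [1, 0, 0] + d2 *\<^sub>R vector [0, 1, 0] + d3 *\<^sub>R vector [0, 0, 1]) (at t within S)"
    using assms by (auto intro!: derivative_eq_intros)
  thus ?thesis
    by (simp only: split[symmetric])
qed

definition homoclinic_orbit :: "real \<Rightarrow> real \<Rightarrow> real^3" where
  "homoclinic_orbit A s =
     vector [A / cosh s, - (A\<^sup>2 * sinh s / (cosh s)\<^sup>2), A\<^sup>2 / (cosh s)\<^sup>2 - A\<^sup>2/2]"

lemma homoclinic_orbit_has_vector_derivative:
  assumes "A \<noteq> 0"
  shows "(homoclinic_orbit A has_vector_derivative (2/A) *\<^sub>R lorenz_hamilton (homoclinic_orbit A s)) (at s)"
proof -
  have sinh_sq: "(sinh s)\<^sup>2 = (cosh s)\<^sup>2 - 1"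
    by (simp add: cosh_square_eq)
  have "(homoclinic_orbit A has_vector_derivative
          vector [- (A * sinh s / (cosh s)\<^sup>2), A\<^sup>2 * ((cosh s)\<^sup>2 - 2) / (cosh s)^3,
                  - (2 * A\<^sup>2 * sinh s / (cosh s)^3)]) (at s)"
    unfolding homoclinic_orbit_def
    by (rule has_vector_derivative_vector3;
        auto intro!: derivative_eq_intros simp: field_simps power2_eq_square power3_eq_cube;
        use sinh_sq in algebra)
  moreover have "vector [- (A * sinh s / (cosh s)\<^sup>2), A\<^sup>2 * ((cosh s)\<^sup>2 - 2) / (cosh s)^3,
                  - (2 * A\<^sup>2 * sinh s / (cosh s)^3)] = (2/A) *\<^sub>R lorenz_hamilton (homoclinic_orbit A s)"
    using assms
    by (simp add: homoclinic_orbit_def lorenz_hamilton_def vec_eq_iff forall_3 field_simps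
        power2_eq_square power3_eq_cube)
  ultimately show ?thesis by simp
qed

lemma homoclinic_orbit_is_trajectory:
  assumes "A \<noteq> 0"
  shows "is_trajectory lorenz_hamilton T (\<lambda>t. homoclinic_orbit A (s0 + A/2 * t))"
proof -
  have "((homoclinic_orbit A \<circ> (\<lambda>t. s0 + A/2 * t)) has_vector_derivative
          (A/2) *\<^sub>R ((2/A) *\<^sub>R lorenz_hamilton (homoclinic_orbit A (s0 + A/2 * t)))) (at t)" for t
    by (intro vector_diff_chain_at homoclinic_orbit_has_vector_derivative assms)
       (auto intro!: derivative_eq_intros)
  thus ?thesis
    using assms unfolding is_trajectory_def o_def by (auto intro: has_vector_derivative_at_within)
qed

lemma homoclinic_orbit_tendsto_at_bot:
  "(homoclinic_orbit A \<longlongrightarrow> vector [0, 0, - (A\<^sup>2/2)]) at_bot"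
proof (rule vec_tendstoI)
  have "((\<lambda>s. A / cosh s) \<longlongrightarrow> 0) at_bot"
    "((\<lambda>s. - (A\<^sup>2 * sinh s / (cosh s)\<^sup>2)) \<longlongrightarrow> 0) at_bot"
    "((\<lambda>s. A\<^sup>2 / (cosh s)\<^sup>2 - A\<^sup>2/2) \<longlongrightarrow> - (A\<^sup>2/2)) at_bot"
    by real_asymp+
  thus "((\<lambda>s. homoclinic_orbit A s $ i) \<longlongrightarrow> vector [0, 0, - (A\<^sup>2/2)] $ i) at_bot" for i
    using exhaust_3[of i] by (auto simp: homoclinic_orbit_def)
qed

lemma not_lyapunov_stable_e3_neg:
  assumes "m < 0"
  shows "\<not> lyapunov_stable lorenz_hamilton (vector [0, 0, m])"
proof
  define A where "A = sqrt (-2*m)"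
  define e :: "real^3" where "e = vector [0, 0, m]"
  have A: "0 < A" "A \<noteq> 0" "m = - (A\<^sup>2/2)"
    using assms by (auto simp: A_def)
  assume "lyapunov_stable lorenz_hamilton (vector [0, 0, m])"
  then obtain V where V: "open V" "e \<in> V"
    and stays: "\<And>T x. 0 \<le> T \<Longrightarrow> is_trajectory lorenz_hamilton T x \<Longrightarrow> x 0 \<in> V \<Longrightarrow>
                  \<forall>t\<in>{0..T}. x t \<in> ball e (A\<^sup>2)"
    unfolding lyapunov_stable_def e_def using A
    by (auto dest!: spec[of _ "ball (vector [0, 0, m]) (A\<^sup>2)"])
  have "(homoclinic_orbit A \<longlongrightarrow> e) at_bot"
    using homoclinic_orbit_tendsto_at_bot[of A] by (simp add: e_def A(3))
  from topological_tendstoD[OF this V]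
  obtain N where "\<And>s. s \<le> N \<Longrightarrow> homoclinic_orbit A s \<in> V"
    unfolding eventually_at_bot_linorder by blast
  moreover define s0 where "s0 = min N 0"
  ultimately have s0: "homoclinic_orbit A s0 \<in> V" "s0 \<le> 0"
    by auto
  define T where "T = -2 * s0 / A"
  have "0 \<le> T" "s0 + A/2 * T = 0"
    using s0(2) A(1) by (simp_all add: T_def divide_nonpos_pos)
  have "homoclinic_orbit A (s0 + A/2 * T) \<in> ball e (A\<^sup>2)"
    using stays[OF \<open>0 \<le> T\<close> homoclinic_orbit_is_trajectory[OF A(2)]] s0(1) \<open>0 \<le> T\<close>
    by simp
  hence "homoclinic_orbit A 0 \<in> ball e (A\<^sup>2)"
    by (simp only: \<open>s0 + A/2 * T = 0\<close>)
  moreover have "(homoclinic_orbit A 0 - e) $ 3 = A\<^sup>2"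
    using A by (simp add: homoclinic_orbit_def e_def)
  hence "A\<^sup>2 \<le> dist (homoclinic_orbit A 0) e"
    using component_le_norm_cart[of "homoclinic_orbit A 0 - e" 3] by (simp add: dist_norm)
  ultimately show False
    by (simp add: dist_commute)
qed

theorem corollary4p5:
  shows "lyapunov_stable lorenz_hamilton (vector [0, 0, 0])
    \<and> (\<forall>m::real. m \<noteq> 0 \<longrightarrow> lyapunov_stable lorenz_hamilton (vector [m, 0, 0]))
    \<and> (\<forall>m::real. m > 0 \<longrightarrow> lyapunov_stable lorenz_hamilton (vector [0, 0, m]))
    \<and> (\<forall>m::real. m < 0 \<longrightarrow> \<not> lyapunov_stable lorenz_hamilton (vector [0, 0, m]))"
  using lyapunov_stable_origin lyapunov_stable_e1 lyapunov_stable_e3_pos not_lyapunov_stable_e3_neg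
  by blast

end
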